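(* Let $M\subseteq\mathbb{R}^n$ be a closed convex set, $\alpha\ge0$, $p\in\mathbb{R}^n$, and $M'=(1+\alpha)M+p$, and assume $\operatorname{aff}(M)\ne\operatorname{aff}(M')$. Let $P=\operatorname{conv}(M\cup M')$. Then: (a) $P=\bigcup_{0\le\mu\le1}\big((1+\mu\alpha)M+\mu p\big)$. (b) Every $f\in P$ can be written as $f=(1+\mu\alpha)x+\mu p$ for some $0\le\mu\le1$ and $x\in M$. Furthermore, if $f=(1+\mu\alpha)x+\mu p$ with $x\in M$ and $\frac13\le\mu\le1$, then \[\tfrac14P+\tfrac34f\subseteq\operatorname{conv}(\{x\}\cup M')\subseteq P.\] *)

theory Defs
  imports "HOL-Analysis.Analysis"
begin

end

theory Submission
  imports Defs
begin

text \<open>With \<open>M' = (1 + \<alpha>) M + p\<close>, a convex combination \<open>(1 - \<mu>) s + \<mu> ((1 + \<alpha>) t + p)\<close> of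
  points of \<open>M\<close> and \<open>M'\<close> equals \<open>(1 + \<mu>\<alpha>) x + \<mu> p\<close>, where \<open>x \<in> M\<close> is the convex combination
  of \<open>s\<close> and \<open>t\<close> with weights proportional to \<open>1 - \<mu>\<close> and \<open>\<mu>(1 + \<alpha>)\<close>; this gives (a), and
  (b) follows. For the inclusion \<open>P/4 + 3f/4 \<subseteq> conv({x} \<union> M')\<close>, write \<open>g \<in> P\<close> as
  \<open>(1 + \<nu>\<alpha>) y + \<nu> p\<close>; then \<open>g/4 + 3f/4 = (1 - s) x + s ((1 + \<alpha>) z + p)\<close> with
  \<open>s = (3\<mu> + \<nu>)/4\<close> and \<open>z\<close> on the segment \<open>[x, y]\<close>, and \<open>\<mu> \<ge> 1/3\<close> is exactly what keeps \<open>z\<close>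
  on that segment.\<close>

lemma convex_combination_homothetic_image:
  fixes M :: "'a::real_vector set"
  assumes "convex M" and "\<alpha> \<ge> 0" and "s \<in> M" and "t \<in> M" and "0 \<le> \<mu>" and "\<mu> \<le> 1"
  shows "\<exists>x\<in>M. (1 - \<mu>) *\<^sub>R s + \<mu> *\<^sub>R ((1 + \<alpha>) *\<^sub>R t + p) = (1 + \<mu> * \<alpha>) *\<^sub>R x + \<mu> *\<^sub>R p"
proof
  define d where "d = 1 + \<mu> * \<alpha>"
  have d_pos: "d > 0"
    unfolding d_def using assms by (simp add: add_pos_nonneg)
  define x where "x = ((1 - \<mu>) / d) *\<^sub>R s + (\<mu> * (1 + \<alpha>) / d) *\<^sub>R t"
  have "(1 - \<mu>) + \<mu> * (1 + \<alpha>) = d"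
    by (simp add: d_def algebra_simps)
  then have weights: "(1 - \<mu>) / d + \<mu> * (1 + \<alpha>) / d = 1"
    using d_pos by (simp add: add_divide_distrib[symmetric])
  show "x \<in> M"
    unfolding x_def using assms d_pos weights by (intro convexD) auto
  have "d *\<^sub>R x = (1 - \<mu>) *\<^sub>R s + (\<mu> * (1 + \<alpha>)) *\<^sub>R t"
    unfolding x_def using d_pos by (simp add: scaleR_add_right)
  then show "(1 - \<mu>) *\<^sub>R s + \<mu> *\<^sub>R ((1 + \<alpha>) *\<^sub>R t + p) = (1 + \<mu> * \<alpha>) *\<^sub>R x + \<mu> *\<^sub>R p"
    by (simp add: d_def algebra_simps)
qed

lemma convex_hull_union_homothetic_image:
  fixes M :: "'a::euclidean_space set"
  assumes "convex M" and "\<alpha> \<ge> 0"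
  shows "convex hull (M \<union> (\<lambda>x. (1 + \<alpha>) *\<^sub>R x + p) ` M)
       = (\<Union>\<mu>\<in>{0..1}. (\<lambda>x. (1 + \<mu> * \<alpha>) *\<^sub>R x + \<mu> *\<^sub>R p) ` M)"
    (is "convex hull (M \<union> ?M') = ?U")
proof (cases "M = {}")
  case False
  have "convex ?M'"
    using convex_affinity[OF \<open>convex M\<close>, of p "1 + \<alpha>"] by (simp add: add.commute)
  have "?M' \<noteq> {}" using False by simp
  show ?thesis
  proof
    show "convex hull (M \<union> ?M') \<subseteq> ?U"
    proof
      fix f assume "f \<in> convex hull (M \<union> ?M')"
      then obtain u \<mu> s t where "0 \<le> u" "0 \<le> \<mu>" "u + \<mu> = 1" "s \<in> M" "t \<in> M"
        and f: "f = u *\<^sub>R s + \<mu> *\<^sub>R ((1 + \<alpha>) *\<^sub>R t + p)"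
        using convex_hull_union_two[OF \<open>convex M\<close> False \<open>convex ?M'\<close> \<open>?M' \<noteq> {}\<close>] by fastforce
      moreover have "u = 1 - \<mu>" using \<open>u + \<mu> = 1\<close> by simp
      ultimately show "f \<in> ?U"
        using convex_combination_homothetic_image[OF assms \<open>s \<in> M\<close> \<open>t \<in> M\<close>, of \<mu> p] by auto
    qed
    show "?U \<subseteq> convex hull (M \<union> ?M')"
    proof
      fix f assume "f \<in> ?U"
      then obtain \<mu> x where "0 \<le> \<mu>" "\<mu> \<le> 1" "x \<in> M"
        and f: "f = (1 + \<mu> * \<alpha>) *\<^sub>R x + \<mu> *\<^sub>R p" by auto
      have "(1 - \<mu>) *\<^sub>R x + \<mu> *\<^sub>R ((1 + \<alpha>) *\<^sub>R x + p) \<in> convex hull (M \<union> ?M')"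
        using \<open>0 \<le> \<mu>\<close> \<open>\<mu> \<le> 1\<close> \<open>x \<in> M\<close>
        by (intro convexD convex_convex_hull) (auto intro: hull_inc)
      moreover have "(1 - \<mu>) *\<^sub>R x + \<mu> *\<^sub>R ((1 + \<alpha>) *\<^sub>R x + p) = f"
        unfolding f by (simp add: algebra_simps)
      ultimately show "f \<in> convex hull (M \<union> ?M')" by simp
    qed
  qed
qed simp

lemma shrink_weights_in_unit_interval:
  fixes \<alpha> \<mu> \<nu> :: real
  assumes "\<alpha> \<ge> 0" and "1/3 \<le> \<mu>" and "\<mu> \<le> 1" and "0 \<le> \<nu>" and "\<nu> \<le> 1"
  defines "s \<equiv> (3 * \<mu> + \<nu>) / 4"
  shows "0 < s" and "s \<le> 1"
    and "0 \<le> (1 + \<nu> * \<alpha>) / (4 * s * (1 + \<alpha>))" and "(1 + \<nu> * \<alpha>) / (4 * s * (1 + \<alpha>)) \<le> 1"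
proof -
  show "0 < s" "s \<le> 1" "0 \<le> (1 + \<nu> * \<alpha>) / (4 * s * (1 + \<alpha>))"
    using assms by auto
  have "1 \<le> 3 * \<mu> * (1 + \<alpha>)"
    using assms mult_mono[of 1 "3 * \<mu>" 1 "1 + \<alpha>"] by simp
  moreover have "\<nu> * \<alpha> \<le> \<nu> * (1 + \<alpha>)" using assms by (simp add: algebra_simps)
  ultimately have "1 + \<nu> * \<alpha> \<le> 4 * s * (1 + \<alpha>)"
    unfolding s_def by (simp add: algebra_simps)
  with \<open>0 < s\<close> assms show "(1 + \<nu> * \<alpha>) / (4 * s * (1 + \<alpha>)) \<le> 1" by simp
qed

lemma homothetic_combination_in_convex_hull_insert:
  fixes M :: "'a::real_vector set"
  assumes "convex M" and "\<alpha> \<ge> 0" and "x \<in> M" and "1/3 \<le> \<mu>" and "\<mu> \<le> 1"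
    and "y \<in> M" and "0 \<le> \<nu>" and "\<nu> \<le> 1"
  shows "(1/4) *\<^sub>R ((1 + \<nu> * \<alpha>) *\<^sub>R y + \<nu> *\<^sub>R p) + (3/4) *\<^sub>R ((1 + \<mu> * \<alpha>) *\<^sub>R x + \<mu> *\<^sub>R p)
    \<in> convex hull (insert x ((\<lambda>x. (1 + \<alpha>) *\<^sub>R x + p) ` M))"
    (is "?w \<in> convex hull (insert x ?M')")
proof -
  define s where "s = (3 * \<mu> + \<nu>) / 4"
  define b where "b = (1 + \<nu> * \<alpha>) / (4 * s * (1 + \<alpha>))"
  note bounds = shrink_weights_in_unit_interval[OF \<open>\<alpha> \<ge> 0\<close> \<open>1/3 \<le> \<mu>\<close> \<open>\<mu> \<le> 1\<close> \<open>0 \<le> \<nu>\<close> \<open>\<nu> \<le> 1\<close>,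
      folded s_def, folded b_def]
  define z where "z = (1 - b) *\<^sub>R x + b *\<^sub>R y"
  have "z \<in> M"
    unfolding z_def using assms bounds by (intro convexD) auto
  then have "(1 - s) *\<^sub>R x + s *\<^sub>R ((1 + \<alpha>) *\<^sub>R z + p) \<in> convex hull (insert x ?M')"
    using bounds by (intro convexD convex_convex_hull) (auto intro: hull_inc)
  moreover have "(1 - s) *\<^sub>R x + s *\<^sub>R ((1 + \<alpha>) *\<^sub>R z + p) = ?w"
  proof -
    have "4 * s * (1 + \<alpha>) \<noteq> 0"
      using bounds \<open>\<alpha> \<ge> 0\<close> by simp
    then have "4 * s * (1 + \<alpha>) * b = 1 + \<nu> * \<alpha>"
      unfolding b_def by (metis nonzero_mult_div_cancel_left times_divide_eq_right)
    then have y_weight: "s * (1 + \<alpha>) * b = (1 + \<nu> * \<alpha>) / 4"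
      by (simp add: algebra_simps)
    have "1 - s + s * (1 + \<alpha>) * (1 - b) = 1 + s * \<alpha> - s * (1 + \<alpha>) * b"
      by (simp add: algebra_simps)
    also have "\<dots> = 1 + s * \<alpha> - (1 + \<nu> * \<alpha>) / 4"
      by (simp only: y_weight)
    also have "\<dots> = (3/4) * (1 + \<mu> * \<alpha>)"
      unfolding s_def by (simp add: field_simps)
    finally have x_weight: "1 - s + s * (1 + \<alpha>) * (1 - b) = (3/4) * (1 + \<mu> * \<alpha>)" .
    have "(1 - s) *\<^sub>R x + s *\<^sub>R ((1 + \<alpha>) *\<^sub>R z + p)
        = (1 - s + s * (1 + \<alpha>) * (1 - b)) *\<^sub>R x + (s * (1 + \<alpha>) * b) *\<^sub>R y + s *\<^sub>R p"
      unfolding z_def by (simp add: algebra_simps)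
    also have "\<dots> = ((3/4) * (1 + \<mu> * \<alpha>)) *\<^sub>R x + ((1 + \<nu> * \<alpha>) / 4) *\<^sub>R y + s *\<^sub>R p"
      by (simp only: x_weight y_weight)
    also have "\<dots> = ?w"
      unfolding s_def by (simp add: algebra_simps add_divide_distrib)
    finally show ?thesis .
  qed
  ultimately show ?thesis by simp
qed

theorem lemma5p2:
  fixes M M' P :: "'a::euclidean_space set" and \<alpha> :: real and p :: 'a
  assumes "closed M" and "convex M" and "\<alpha> \<ge> 0"
    and M'_def: "M' = (\<lambda>x. (1 + \<alpha>) *\<^sub>R x + p) ` M"
    and "affine hull M \<noteq> affine hull M'"
    and P_def: "P = convex hull (M \<union> M')"
  shows "(P = (\<Union>\<mu>\<in>{0..1}. (\<lambda>x. (1 + \<mu> * \<alpha>) *\<^sub>R x + \<mu> *\<^sub>R p) ` M))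
    \<and> (\<forall>f\<in>P. \<exists>\<mu>\<in>{0..1}. \<exists>x\<in>M. f = (1 + \<mu> * \<alpha>) *\<^sub>R x + \<mu> *\<^sub>R p)
    \<and> (\<forall>f x \<mu>. x \<in> M \<and> 1/3 \<le> \<mu> \<and> \<mu> \<le> 1 \<and> f = (1 + \<mu> * \<alpha>) *\<^sub>R x + \<mu> *\<^sub>R p \<longrightarrow>
           (\<lambda>y. (1/4) *\<^sub>R y + (3/4) *\<^sub>R f) ` P \<subseteq> convex hull (insert x M')
         \<and> convex hull (insert x M') \<subseteq> P)"
proof -
  have P_eq: "P = (\<Union>\<mu>\<in>{0..1}. (\<lambda>x. (1 + \<mu> * \<alpha>) *\<^sub>R x + \<mu> *\<^sub>R p) ` M)"
    unfolding P_def M'_def using convex_hull_union_homothetic_image[OF \<open>convex M\<close> \<open>\<alpha> \<ge> 0\<close>] .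
  have "(\<lambda>y. (1/4) *\<^sub>R y + (3/4) *\<^sub>R f) ` P \<subseteq> convex hull (insert x M')
      \<and> convex hull (insert x M') \<subseteq> P"
    if "x \<in> M" "1/3 \<le> \<mu>" "\<mu> \<le> 1" "f = (1 + \<mu> * \<alpha>) *\<^sub>R x + \<mu> *\<^sub>R p" for f x \<mu>
  proof
    show "(\<lambda>y. (1/4) *\<^sub>R y + (3/4) *\<^sub>R f) ` P \<subseteq> convex hull (insert x M')"
      unfolding P_eq M'_def using that
      by (auto intro!: homothetic_combination_in_convex_hull_insert[OF \<open>convex M\<close> \<open>\<alpha> \<ge> 0\<close>])
    show "convex hull (insert x M') \<subseteq> P"
      unfolding P_def using \<open>x \<in> M\<close> by (intro hull_mono) auto
  qed
  with P_eq show ?thesis by blast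
qed

end
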